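(* Let $q$ be a prime power and $1\le k\le n-1$. A non-empty set of affine $k$-spaces of $\mathrm{AG}(n,q)$ all contained in a fixed hyperplane of $\mathrm{AG}(n,q)$ is not a Cameron-Liebler $k$-set of $\mathrm{AG}(n,q)$.
   Context: $\mathrm{AG}(n,q)$ is $\mathrm{PG}(n,q)$ with a hyperplane $\pi_\infty$ removed; affine points are points outside $\pi_\infty$, affine $k$-spaces (resp. hyperplanes) are $k$-dimensional (resp. $(n-1)$-dimensional) projective subspaces not contained in $\pi_\infty$. With $A_n$ the incidence matrix of affine points versus affine $k$-spaces, a set of affine $k$-spaces is a Cameron-Liebler $k$-set of $\mathrm{AG}(n,q)$ if its characteristic vector lies in the real row space $\mathrm{Im}(A_n^T)$. *)

theory Defs
  imports Complex_Main "HOL-Library.Cardinality"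
begin

text \<open>Points of AG(n,q): functions 'n => 'a, with 'a a finite field (of order q)
  and 'n a finite index type with CARD('n) = n.\<close>

definition lin_indep :: "nat \<Rightarrow> (nat \<Rightarrow> 'n \<Rightarrow> 'a::field) \<Rightarrow> bool" where
  "lin_indep k v \<longleftrightarrow>
     (\<forall>c. (\<forall>j. (\<Sum>i<k. c i * v i j) = 0) \<longrightarrow> (\<forall>i<k. c i = 0))"

definition affine_span :: "('n \<Rightarrow> 'a::field) \<Rightarrow> nat \<Rightarrow> (nat \<Rightarrow> 'n \<Rightarrow> 'a) \<Rightarrow> ('n \<Rightarrow> 'a) set" where
  "affine_span p k v = {x. \<exists>c. \<forall>j. x j = p j + (\<Sum>i<k. c i * v i j)}"

definition affine_subspace :: "nat \<Rightarrow> ('n::finite \<Rightarrow> 'a::{field,finite}) set \<Rightarrow> bool" where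
  "affine_subspace k S \<longleftrightarrow> (\<exists>p v. lin_indep k v \<and> S = affine_span p k v)"

definition affine_hyperplane :: "('n::finite \<Rightarrow> 'a::{field,finite}) set \<Rightarrow> bool" where
  "affine_hyperplane H \<longleftrightarrow> affine_subspace (CARD('n) - 1) (H :: ('n \<Rightarrow> 'a) set)"

text \<open>Incidence matrix A_n: affine points versus affine k-spaces.\<close>
definition incidence :: "('n \<Rightarrow> 'a) \<Rightarrow> ('n \<Rightarrow> 'a) set \<Rightarrow> real" where
  "incidence p K = (if p \<in> K then 1 else 0)"

text \<open>Real row space Im(A_n^T), as functions on the affine k-spaces.\<close>
definition row_space :: "nat \<Rightarrow> ((('n::finite \<Rightarrow> 'a::{field,finite}) set) \<Rightarrow> real) set" where
  "row_space k = {f. \<exists>y :: ('n \<Rightarrow> 'a) \<Rightarrow> real.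
      \<forall>K. affine_subspace k K \<longrightarrow> f K = (\<Sum>p\<in>UNIV. incidence p K * y p)}"

definition cameron_liebler :: "nat \<Rightarrow> ('n::finite \<Rightarrow> 'a::{field,finite}) set set \<Rightarrow> bool" where
  "cameron_liebler k L \<longleftrightarrow>
     (\<forall>K\<in>L. affine_subspace k K) \<and>
     (\<lambda>K. if K \<in> L then 1 else 0) \<in> row_space k"

end

theory Submission
  imports Defs "HOL-Library.FuncSet" "HOL-Library.Function_Algebras"
begin

text \<open>
  If y witnesses that the indicator of L lies in the row space, then the indicator of every
  affine k-space K is the sum of y over the points of K. A parallel class of k-spaces partitions
  the point set, so every parallel class contains the same number of members of L, namely the
  total sum of y. The parallel class of a member of L meets L. But all members of L lie in the
  hyperplane H, so replacing one direction vector of that member by a vector outside the direction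
  space of H yields a parallel class none of whose k-spaces lies in H, hence one that misses L.
\<close>

definition parallel_class :: "nat \<Rightarrow> (nat \<Rightarrow> 'n \<Rightarrow> 'a::field) \<Rightarrow> ('n \<Rightarrow> 'a) set set" where
  "parallel_class k v = range (\<lambda>p. affine_span p k v)"

lemma mem_affine_span_iff: "x \<in> affine_span p k v \<longleftrightarrow> (\<exists>c. \<forall>j. x j = p j + (\<Sum>i<k. c i * v i j))"
  by (simp add: affine_span_def)

lemma affine_span_self: "p \<in> affine_span p k v"
  unfolding mem_affine_span_iff by (intro exI[of _ "\<lambda>_. 0"]) simp

lemma affine_span_add_vector: "i < k \<Longrightarrow> p + v i \<in> affine_span p k v"
  unfolding mem_affine_span_iff
  by (intro exI[of _ "\<lambda>i'. of_bool (i' = i)"]) simp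

text \<open>affine_span 0 k v is the linear span of v 0, ..., v (k - 1), the direction space of
  every affine_span p k v.\<close>

lemma affine_span_diff:
  assumes "x \<in> affine_span p k v" "x' \<in> affine_span p k v"
  shows "x' - x \<in> affine_span 0 k v"
proof -
  obtain a b where "\<And>j. x j = p j + (\<Sum>i<k. a i * v i j)" "\<And>j. x' j = p j + (\<Sum>i<k. b i * v i j)"
    using assms unfolding mem_affine_span_iff by blast
  then have "\<forall>j. (x' - x) j = (\<Sum>i<k. (b i - a i) * v i j)"
    by (simp add: left_diff_distrib sum_subtractf)
  then show ?thesis unfolding mem_affine_span_iff by auto
qed

lemma affine_span_eq_if_mem:
  assumes "x \<in> affine_span p k v"
  shows "affine_span x k v = affine_span p k v"
proof -
  obtain c where c: "\<And>j. x j = p j + (\<Sum>i<k. c i * v i j)"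
    using assms unfolding mem_affine_span_iff by blast
  have "y \<in> affine_span p k v" if y: "y \<in> affine_span x k v" for y
  proof -
    obtain d where "\<And>j. y j = x j + (\<Sum>i<k. d i * v i j)"
      using y unfolding mem_affine_span_iff by blast
    then have "\<forall>j. y j = p j + (\<Sum>i<k. (c i + d i) * v i j)"
      by (simp add: c distrib_right sum.distrib add.assoc)
    then show ?thesis unfolding mem_affine_span_iff by auto
  qed
  moreover have "y \<in> affine_span x k v" if y: "y \<in> affine_span p k v" for y
  proof -
    obtain d where "\<And>j. y j = p j + (\<Sum>i<k. d i * v i j)"
      using y unfolding mem_affine_span_iff by blast
    then have "\<forall>j. y j = x j + (\<Sum>i<k. (d i - c i) * v i j)"
      by (simp add: c left_diff_distrib sum_subtractf)
    then show ?thesis unfolding mem_affine_span_iff by auto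
  qed
  ultimately show ?thesis by blast
qed

lemma sum_parallel_class:
  fixes y :: "('n::finite \<Rightarrow> 'a::{field,finite}) \<Rightarrow> 'b::comm_monoid_add"
  shows "(\<Sum>S\<in>parallel_class k v. \<Sum>x\<in>S. y x) = (\<Sum>x\<in>UNIV. y x)"
proof -
  have "\<Union>(parallel_class k v) = UNIV"
    unfolding parallel_class_def using affine_span_self by blast
  moreover have "A \<inter> B = {}" if "A \<in> parallel_class k v" "B \<in> parallel_class k v" "A \<noteq> B" for A B
    using that unfolding parallel_class_def by (auto dest: affine_span_eq_if_mem)
  ultimately show ?thesis
    using sum.Union_disjoint[of "parallel_class k v" y] by simp
qed

lemma sum_incidence: "(\<Sum>p\<in>UNIV. incidence p K * y p) = sum y K"
  for K :: "('n::finite \<Rightarrow> 'a::finite) set"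
  by (simp add: incidence_def if_distrib[where f="\<lambda>c. c * _"] sum.If_cases)

lemma affine_subspace_affine_span: "lin_indep k v \<Longrightarrow> affine_subspace k (affine_span p k v)"
  unfolding affine_subspace_def by blast

lemma row_space_sum_parallel_class_eq:
  assumes "f \<in> row_space k" "lin_indep k v" "lin_indep k w"
  shows "sum f (parallel_class k v) = sum f (parallel_class k w)"
proof -
  obtain y where y: "\<And>K. affine_subspace k K \<Longrightarrow> f K = sum y K"
    using assms(1) unfolding row_space_def by (auto simp: sum_incidence)
  have "sum f (parallel_class k v) = sum y UNIV" if "lin_indep k v" for v
  proof -
    have "sum f (parallel_class k v) = (\<Sum>S\<in>parallel_class k v. sum y S)"
      using that by (auto simp: parallel_class_def intro!: sum.cong y affine_subspace_affine_span)
    then show ?thesis by (simp add: sum_parallel_class)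
  qed
  with assms(2,3) show ?thesis by simp
qed

lemma cameron_liebler_card_parallel_class_eq:
  assumes "cameron_liebler k L" "lin_indep k v" "lin_indep k w"
  shows "card (parallel_class k v \<inter> L) = card (parallel_class k w \<inter> L)"
proof -
  have "(\<lambda>K. of_bool (K \<in> L) :: real) \<in> row_space k"
    using assms(1) unfolding cameron_liebler_def of_bool_def by simp
  from row_space_sum_parallel_class_eq[OF this assms(2,3)] show ?thesis
    by (simp add: parallel_class_def)
qed

lemma linear_combination_mem_affine_span_0:
  assumes "\<forall>i<k. v i \<in> affine_span 0 m u"
  shows "(\<lambda>j. \<Sum>i<k. c i * v i j) \<in> affine_span 0 m u"
proof -
  obtain b where b: "\<And>i j. i < k \<Longrightarrow> v i j = (\<Sum>l<m. b i l * u l j)"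
    using assms unfolding mem_affine_span_iff by simp metis
  have "(\<Sum>i<k. c i * v i j) = (\<Sum>l<m. (\<Sum>i<k. c i * b i l) * u l j)" for j
    by (simp add: b sum_distrib_left sum_distrib_right mult.assoc sum.swap[of _ "{..<m}"])
  then show ?thesis unfolding mem_affine_span_iff by auto
qed

lemma sum_fun_upd_split:
  fixes v :: "nat \<Rightarrow> 'n \<Rightarrow> 'a::field"
  assumes "i0 < k"
  shows "(\<Sum>i<k. c i * (v(i0 := e)) i j) = c i0 * e j + (\<Sum>i<k. (c(i0 := 0)) i * v i j)"
  using assms by (auto simp: sum.remove[of "{..<k}" i0] intro!: sum.cong)

lemma lin_indep_fun_upd:
  fixes v :: "nat \<Rightarrow> 'n \<Rightarrow> 'a::field"
  assumes indep: "lin_indep k v" and "i0 < k"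
    and span: "\<forall>i<k. v i \<in> affine_span 0 m u" and e: "e \<notin> affine_span 0 m u"
  shows "lin_indep k (v(i0 := e))"
  unfolding lin_indep_def
proof (intro allI impI)
  fix c i
  assume comb: "\<forall>j. (\<Sum>i<k. c i * (v(i0 := e)) i j) = 0" and "i < k"
  have ci0: "c i0 = 0"
  proof (rule ccontr)
    assume "c i0 \<noteq> 0"
    have e_eq: "e = (\<lambda>j. \<Sum>i<k. (- (c(i0 := 0)) i / c i0) * v i j)"
    proof
      fix j
      have "c i0 * e j + (\<Sum>i<k. (c(i0 := 0)) i * v i j) = 0"
        using comb unfolding sum_fun_upd_split[OF \<open>i0 < k\<close>] by blast
      moreover have "(\<Sum>i<k. (- (c(i0 := 0)) i / c i0) * v i j) = - (\<Sum>i<k. (c(i0 := 0)) i * v i j) / c i0"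
        by (simp add: sum_divide_distrib sum_negf)
      ultimately show "e j = (\<Sum>i<k. (- (c(i0 := 0)) i / c i0) * v i j)"
        using \<open>c i0 \<noteq> 0\<close> by (simp add: field_simps add_eq_0_iff)
    qed
    show False
      using e linear_combination_mem_affine_span_0[OF span, of "\<lambda>i. - (c(i0 := 0)) i / c i0"]
      unfolding e_eq by blast
  qed
  have "\<forall>j. (\<Sum>i<k. c i * v i j) = 0"
    using comb unfolding sum_fun_upd_split[OF \<open>i0 < k\<close>] fun_upd_idem[of c, OF ci0] by (simp add: ci0)
  with indep \<open>i < k\<close> show "c i = 0" unfolding lin_indep_def by blast
qed

lemma direction_mem_if_affine_span_subset:
  assumes "affine_span p k v \<subseteq> affine_span h m u" "i < k"
  shows "v i \<in> affine_span 0 m u"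
proof -
  have "p \<in> affine_span h m u" "p + v i \<in> affine_span h m u"
    using assms affine_span_self affine_span_add_vector by blast+
  from affine_span_diff[OF this] show ?thesis by simp
qed

lemma parallel_class_not_subset:
  assumes "S \<in> parallel_class k v" "i < k" "v i \<notin> affine_span 0 m u"
  shows "\<not> S \<subseteq> affine_span h m u"
  using assms direction_mem_if_affine_span_subset unfolding parallel_class_def by blast

lemma card_affine_span_le:
  "card (affine_span (p :: 'n::finite \<Rightarrow> 'a::{field,finite}) m u) \<le> CARD('a) ^ m"
proof -
  let ?point = "\<lambda>c j. p j + (\<Sum>i<m. c i * u i j)"
  have "affine_span p m u \<subseteq> ?point ` ({..<m} \<rightarrow>\<^sub>E UNIV)"
  proof
    fix x assume "x \<in> affine_span p m u"
    then obtain c where "x = ?point c"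
      unfolding mem_affine_span_iff by blast
    also have "\<dots> = ?point (restrict c {..<m})"
      by (intro ext arg_cong2[where f="(+)"] sum.cong) auto
    finally show "x \<in> ?point ` ({..<m} \<rightarrow>\<^sub>E UNIV)"
      by (rule image_eqI[where x = "restrict c {..<m}"]) simp
  qed
  then have "card (affine_span p m u) \<le> card (?point ` ({..<m} \<rightarrow>\<^sub>E UNIV))"
    by (intro card_mono) simp_all
  also have "\<dots> \<le> card ({..<m} \<rightarrow>\<^sub>E (UNIV :: 'a set))"
    by (intro card_image_le finite_PiE) simp_all
  also have "\<dots> = CARD('a) ^ m"
    by (simp add: card_PiE)
  finally show ?thesis .
qed

lemma ex_not_mem_affine_span:
  assumes "m < CARD('n::finite)"
  shows "\<exists>e. e \<notin> affine_span (p :: 'n \<Rightarrow> 'a::{field,finite}) m u"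
proof (rule ccontr)
  assume "\<nexists>e. e \<notin> affine_span p m u"
  then have "affine_span p m u = UNIV"
    by blast
  then have "CARD('a) ^ CARD('n) \<le> CARD('a) ^ m"
    using card_affine_span_le[of p m u] by (simp add: card_fun)
  moreover have "CARD('a) \<ge> 2"
    using card_mono[of UNIV "{0 :: 'a, 1}"] by simp
  ultimately show False
    using assms by (simp add: power_strict_increasing leD)
qed

theorem lemma6p2:
  fixes L :: "('n::finite \<Rightarrow> 'a::{field,finite}) set set"
    and H :: "('n \<Rightarrow> 'a) set"
    and k :: nat
  assumes "1 \<le> k" and "k \<le> CARD('n) - 1"
    and "L \<noteq> {}"
    and "\<forall>K\<in>L. affine_subspace k K"
    and "affine_hyperplane H"
    and "\<forall>K\<in>L. K \<subseteq> H"
  shows "\<not> cameron_liebler k L"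
proof
  assume CL: "cameron_liebler k L"
  define m where "m = CARD('n) - 1"
  obtain K0 p0 v where "K0 \<in> L" and v: "lin_indep k v" and K0: "K0 = affine_span p0 k v"
    using assms(3,4) unfolding affine_subspace_def by blast
  obtain h u where H: "H = affine_span h m u"
    using assms(5) unfolding affine_hyperplane_def affine_subspace_def m_def by blast
  have "m < CARD('n)"
    using assms(1,2) unfolding m_def by linarith
  then obtain e where e: "e \<notin> affine_span 0 m u"
    using ex_not_mem_affine_span by blast
  have "\<forall>i<k. v i \<in> affine_span 0 m u"
    using direction_mem_if_affine_span_subset assms(6) \<open>K0 \<in> L\<close> unfolding K0 H by blast
  with v e assms(1) have v': "lin_indep k (v(0 := e))"
    by (simp add: lin_indep_fun_upd)
  have "K0 \<in> parallel_class k v \<inter> L"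
    using \<open>K0 \<in> L\<close> unfolding K0 parallel_class_def by blast
  then have "card (parallel_class k v \<inter> L) \<noteq> 0"
    by (auto simp: parallel_class_def)
  moreover have "parallel_class k (v(0 := e)) \<inter> L = {}"
    using parallel_class_not_subset[of _ k "v(0 := e)" 0] assms(1,6) e H by fastforce
  ultimately show False
    using cameron_liebler_card_parallel_class_eq[OF CL v v'] by simp
qed

end
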